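(* Let $\mathcal{A}=(Q,\delta,s)$ be an NFA over a finite alphabet $\Sigma$ and let $\mathcal{P}$ be any forward-stable partition on $\mathcal{A}$. Then $B_{\mathcal{P}}:=\{(u,v)\in Q\times Q: u,v\in S \text{ for some } S\in\mathcal{P}\}$ is a bisimulation on $\mathcal{A}^{-1}$.
   Context: An NFA is $\mathcal{A}=(Q,\delta,s)$ with $\delta:Q\times\Sigma\to2^Q$; write $\delta_a(u)=\delta(u,a)$, $\delta_a(T)=\bigcup_{u\in T}\delta_a(u)$, $\delta_a^{-1}(u)=\{v:u\in\delta_a(v)\}$. $\mathcal{A}^{-1}=(Q,\delta^{-1},s)$ with $\delta^{-1}(u,a)=\delta^{-1}_a(u)$. A bisimulation on an NFA $(Q,\gamma,s)$ is a relation $B\subseteq Q\times Q$ such that for all $(u,v)\in B$ and $a\in\Sigma$: if $u'\in\gamma_a(u)$ then some $v'\in\gamma_a(v)$ has $(u',v')\in B$, and if $v'\in\gamma_a(v)$ then some $u'\in\gamma_a(u)$ has $(u',v')\in B$. A partition $\mathcal{P}$ of $Q$ is forward-stable on $\mathcal{A}$ if for any parts $S,T\in\mathcal{P}$ and every $a$, $S\subseteq\delta_a(T)$ or $S\cap\delta_a(T)=\emptyset$. *)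

theory Defs
  imports "HOL-Library.Disjoint_Sets"
begin

definition nfa :: "'q set \<Rightarrow> 'a set \<Rightarrow> ('q \<Rightarrow> 'a \<Rightarrow> 'q set) \<Rightarrow> 'q \<Rightarrow> bool" where
  "nfa Q \<Sigma> \<delta> s \<longleftrightarrow> finite Q \<and> finite \<Sigma> \<and> s \<in> Q \<and>
     (\<forall>u\<in>Q. \<forall>a\<in>\<Sigma>. \<delta> u a \<subseteq> Q)"

definition delta_set :: "('q \<Rightarrow> 'a \<Rightarrow> 'q set) \<Rightarrow> 'a \<Rightarrow> 'q set \<Rightarrow> 'q set" where
  "delta_set \<delta> a T = (\<Union>u\<in>T. \<delta> u a)"

definition inv_delta :: "'q set \<Rightarrow> ('q \<Rightarrow> 'a \<Rightarrow> 'q set) \<Rightarrow> 'q \<Rightarrow> 'a \<Rightarrow> 'q set" where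
  "inv_delta Q \<delta> u a = {v \<in> Q. u \<in> \<delta> v a}"

definition bisimulation :: "'q set \<Rightarrow> 'a set \<Rightarrow> ('q \<Rightarrow> 'a \<Rightarrow> 'q set) \<Rightarrow> ('q \<times> 'q) set \<Rightarrow> bool" where
  "bisimulation Q \<Sigma> \<gamma> B \<longleftrightarrow> B \<subseteq> Q \<times> Q \<and>
     (\<forall>(u, v)\<in>B. \<forall>a\<in>\<Sigma>.
        (\<forall>u'\<in>\<gamma> u a. \<exists>v'\<in>\<gamma> v a. (u', v') \<in> B) \<and>
        (\<forall>v'\<in>\<gamma> v a. \<exists>u'\<in>\<gamma> u a. (u', v') \<in> B))"

definition forward_stable :: "'q set \<Rightarrow> 'a set \<Rightarrow> ('q \<Rightarrow> 'a \<Rightarrow> 'q set) \<Rightarrow> 'q set set \<Rightarrow> bool" where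
  "forward_stable Q \<Sigma> \<delta> P \<longleftrightarrow> partition_on Q P \<and>
     (\<forall>S\<in>P. \<forall>T\<in>P. \<forall>a\<in>\<Sigma>. S \<subseteq> delta_set \<delta> a T \<or> S \<inter> delta_set \<delta> a T = {})"

definition part_rel :: "'q set set \<Rightarrow> ('q \<times> 'q) set" where
  "part_rel P = {(u, v). \<exists>S\<in>P. u \<in> S \<and> v \<in> S}"

end

theory Submission
  imports Defs
begin

text \<open>If u and v lie in a common block S and u' \<in> T is an a-predecessor of u, then S meets
  delta_a(T), so forward stability gives S \<subseteq> delta_a(T): v has an a-predecessor v' in the
  same block T as u'. As B_P is symmetric, this forth condition also yields the back condition.\<close>

lemma sym_part_rel: "sym (part_rel P)"
  unfolding part_rel_def sym_def by blast

lemma part_rel_subset: "partition_on Q P \<Longrightarrow> part_rel P \<subseteq> Q \<times> Q"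
  unfolding part_rel_def partition_on_def by blast

lemma bisimulation_if_sym:
  assumes "B \<subseteq> Q \<times> Q" and "sym B"
    and forth: "\<And>u v a u'. (u, v) \<in> B \<Longrightarrow> a \<in> \<Sigma> \<Longrightarrow> u' \<in> \<gamma> u a \<Longrightarrow> \<exists>v'\<in>\<gamma> v a. (u', v') \<in> B"
  shows "bisimulation Q \<Sigma> \<gamma> B"
proof -
  have backward: "\<exists>u'\<in>\<gamma> u a. (u', v') \<in> B"
    if "(u, v) \<in> B" and a: "a \<in> \<Sigma>" and v': "v' \<in> \<gamma> v a" for u v a v'
  proof -
    have "(v, u) \<in> B" using \<open>sym B\<close> \<open>(u, v) \<in> B\<close> by (rule symD)
    then obtain u' where "u' \<in> \<gamma> u a" "(v', u') \<in> B" using forth a v' by blast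
    then show ?thesis using \<open>sym B\<close> by (blast dest: symD)
  qed
  show ?thesis unfolding bisimulation_def using assms(1) forth backward by blast
qed

lemma forward_stable_inv_delta_forth:
  assumes stable: "forward_stable Q \<Sigma> \<delta> P"
    and uv: "(u, v) \<in> part_rel P" and a: "a \<in> \<Sigma>" and u': "u' \<in> inv_delta Q \<delta> u a"
  shows "\<exists>v'\<in>inv_delta Q \<delta> v a. (u', v') \<in> part_rel P"
proof -
  have partition: "partition_on Q P" using stable unfolding forward_stable_def by blast
  obtain S where S: "S \<in> P" "u \<in> S" "v \<in> S" using uv unfolding part_rel_def by blast
  have "u' \<in> Q" and "u \<in> \<delta> u' a" using u' unfolding inv_delta_def by auto
  then obtain T where T: "T \<in> P" "u' \<in> T" using partition unfolding partition_on_def by blast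
  have "u \<in> S \<inter> delta_set \<delta> a T" using S \<open>u \<in> \<delta> u' a\<close> T unfolding delta_set_def by blast
  then have "S \<subseteq> delta_set \<delta> a T" using stable S(1) T(1) a unfolding forward_stable_def by blast
  then obtain v' where v': "v' \<in> T" "v \<in> \<delta> v' a" using S(3) unfolding delta_set_def by blast
  have "v' \<in> Q" using partition T(1) v'(1) unfolding partition_on_def by blast
  then have "v' \<in> inv_delta Q \<delta> v a" using v'(2) unfolding inv_delta_def by simp
  moreover have "(u', v') \<in> part_rel P" using T v'(1) unfolding part_rel_def by blast
  ultimately show ?thesis by blast
qed

theorem lemma21:
  fixes Q :: "'q set" and \<Sigma> :: "'a set" and \<delta> :: "'q \<Rightarrow> 'a \<Rightarrow> 'q set" and s :: 'q
    and P :: "'q set set"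
  assumes "nfa Q \<Sigma> \<delta> s"
    and "forward_stable Q \<Sigma> \<delta> P"
  shows "bisimulation Q \<Sigma> (inv_delta Q \<delta>) (part_rel P)"
proof (rule bisimulation_if_sym)
  show "part_rel P \<subseteq> Q \<times> Q"
    using assms(2) part_rel_subset unfolding forward_stable_def by blast
  show "sym (part_rel P)" by (rule sym_part_rel)
qed (use forward_stable_inv_delta_forth[OF assms(2)] in blast)

end
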